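(* Let $X=[0,\bar a]$ be a nonempty interval and $f:X\to X$ satisfy: (i) $f$ is strictly concave and Lipschitz continuous; (ii) $f(x)\ge 0$ for all $x\in X$; (iii) letting $\bar x\in X$ be the point at which $f$ attains its maximum on $X$ (so $f$ is strictly increasing on $I=[0,\bar x)$ and strictly decreasing on $D=[\bar x,\bar a]$), the restriction of $f$ to $D$ is $L$-Lipschitz with $L<1$; (iv) there is a positive $b\in X$ with $f(b)<b$. Then for every $x_0\in X$, the fixed-point iteration $x_{k+1}=f(x_k)$ converges to a fixed point of $f$.
   Context: A function $f$ is $L$-Lipschitz if $|f(x)-f(y)|\le L|x-y|$ for all $x,y$; Lipschitz continuous if it is $L$-Lipschitz for some $L>0$. $f$ is strictly concave if $f((1-\lambda)x+\lambda y)>(1-\lambda)f(x)+\lambda f(y)$ for all $x\ne y$ and $0<\lambda<1$. *)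

theory Defs
  imports "HOL-Analysis.Analysis"
begin

definition strictly_concave_on :: "real set \<Rightarrow> (real \<Rightarrow> real) \<Rightarrow> bool" where
  "strictly_concave_on S f \<longleftrightarrow>
     (\<forall>x\<in>S. \<forall>y\<in>S. \<forall>t::real. x \<noteq> y \<and> 0 < t \<and> t < 1 \<longrightarrow>
        f ((1 - t) * x + t * y) > (1 - t) * f x + t * f y)"

end

theory Submission
  imports Defs "HOL-Analysis.Analysis"
begin

text \<open>Let \<open>p\<close> be the largest fixed point below \<open>b\<close>. By concavity the graph of \<open>f\<close> lies
above the diagonal on \<open>[0, p]\<close> and below it on \<open>[p, a]\<close>; monotonicity below the maximiser
\<open>xbar\<close> together with the Lipschitz bound beyond it shows that \<open>f\<close> overshoots \<open>p\<close> by at most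
\<open>L\<close> times the distance to \<open>p\<close>. Hence \<open>|x\<^sub>k - p|\<close> never increases and shrinks by the
factor \<open>L\<close> whenever the orbit jumps across \<open>p\<close>. If the distances tend to a positive limit,
the orbit can jump only finitely often, so it eventually stays on one side of \<open>p\<close> and
\<open>x\<^sub>k = p \<plusminus> |x\<^sub>k - p|\<close> converges. A limit of an orbit of a continuous map is a fixed point.\<close>

lemma strictly_concave_on_imp_concave_on:
  assumes "convex S" "strictly_concave_on S f"
  shows "concave_on S f"
  using assms unfolding strictly_concave_on_def
  by (intro concave_on_linorderI) (auto intro: less_imp_le)

lemma concave_on_chord_le:
  fixes f :: "real \<Rightarrow> real"
  assumes "concave_on S f" "u \<in> S" "w \<in> S" "u < v" "v < w"
  shows "(w - v) * f u + (v - u) * f w \<le> (w - u) * f v"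
proof -
  define t where "t = (v - u) / (w - u)"
  have t: "0 \<le> t" "t \<le> 1" "t * (w - u) = v - u"
    using assms(4,5) by (auto simp: t_def field_simps)
  have "(1 - t) *\<^sub>R u + t *\<^sub>R w = v"
    using t(3) by (simp add: algebra_simps)
  then have "(1 - t) * f u + t * f w \<le> f v"
    using concave_onD[OF assms(1) t(1,2) assms(2,3)] by simp
  then have "(w - u) * ((1 - t) * f u + t * f w) \<le> (w - u) * f v"
    using assms(4,5) by (intro mult_left_mono) auto
  moreover have "(w - u) * ((1 - t) * f u + t * f w) =
      (w - u - t * (w - u)) * f u + t * (w - u) * f w"
    by (simp add: algebra_simps)
  ultimately show ?thesis
    unfolding t(3) by simp
qed

lemma concave_on_nonneg_between:
  fixes g :: "real \<Rightarrow> real"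
  assumes "concave_on S g" "u \<in> S" "w \<in> S" "u \<le> x" "x \<le> w" "0 \<le> g u" "0 \<le> g w"
  shows "0 \<le> g x"
proof (cases "x = u \<or> x = w")
  case False
  then have "u < x" "x < w"
    using assms(4,5) by auto
  have "0 \<le> (w - x) * g u + (x - u) * g w"
    using \<open>u < x\<close> \<open>x < w\<close> assms(6,7) by simp
  also have "\<dots> \<le> (w - u) * g x"
    using concave_on_chord_le[OF assms(1-3) \<open>u < x\<close> \<open>x < w\<close>] .
  finally show ?thesis
    using \<open>u < x\<close> \<open>x < w\<close> by (simp add: zero_le_mult_iff)
qed (use assms in auto)

lemma concave_on_neg_beyond:
  fixes g :: "real \<Rightarrow> real"
  assumes "concave_on S g" "u \<in> S" "w \<in> S" "u < v" "v < w" "0 \<le> g u" "g v < 0"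
  shows "g w < 0"
proof -
  have "(v - u) * g w \<le> (w - v) * g u + (v - u) * g w"
    using assms(5,6) by simp
  also have "\<dots> \<le> (w - u) * g v"
    using concave_on_chord_le[OF assms(1-5)] .
  also have "\<dots> < 0"
    using assms(4,5,7) by (simp add: mult_pos_neg)
  finally show ?thesis
    using assms(4) by (simp add: mult_less_0_iff)
qed

lemma concave_on_mono_below_max:
  fixes f :: "real \<Rightarrow> real"
  assumes "concave_on S f" "xbar \<in> S" "x \<in> S" "\<And>y. y \<in> S \<Longrightarrow> f y \<le> f xbar"
    and "x \<le> y" "y \<le> xbar"
  shows "f x \<le> f y"
proof (cases "x = y \<or> y = xbar")
  case False
  then have "x < y" "y < xbar"
    using assms(5,6) by auto
  have "(y - x) * f x \<le> (y - x) * f xbar"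
    using assms(4)[OF assms(3)] \<open>x < y\<close> by (simp add: mult_left_mono)
  then have "(xbar - x) * f x \<le> (xbar - y) * f x + (y - x) * f xbar"
    by (simp add: algebra_simps)
  also have "\<dots> \<le> (xbar - x) * f y"
    using concave_on_chord_le[OF assms(1,3,2) \<open>x < y\<close> \<open>y < xbar\<close>] .
  finally show ?thesis
    using \<open>x < y\<close> \<open>y < xbar\<close> by simp
qed (use assms in auto)

lemma greatest_fixed_point_below:
  fixes f :: "real \<Rightarrow> real"
  assumes cont: "continuous_on {c..b} f" and "c \<le> b" "c \<le> f c" "f b < b"
  obtains p where "p \<in> {c..<b}" "f p = p" "\<And>x. x \<in> {p<..b} \<Longrightarrow> f x < x"
proof -
  define S where "S = {x \<in> {c..b}. x \<le> f x}"
  have "closed S"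
    unfolding S_def by (intro continuous_on_closed_Collect_le continuous_on_id cont) simp
  have "c \<in> S" "bdd_above S"
    using assms(2,3) by (auto simp: S_def intro: bdd_aboveI[of _ b])
  define p where "p = Sup S"
  have "p \<in> S"
    unfolding p_def using \<open>closed S\<close> \<open>c \<in> S\<close> \<open>bdd_above S\<close>
    by (intro closed_contains_Sup) auto
  then have p: "p \<in> {c..<b}"
    using assms(4) by (cases "p = b") (auto simp: S_def)
  have beyond: "f x < x" if "x \<in> {p<..b}" for x
  proof -
    have "x \<notin> S"
      using that cSup_upper[OF _ \<open>bdd_above S\<close>] unfolding p_def by fastforce
    then show ?thesis
      using that p by (auto simp: S_def)
  qed
  have "f p = p"
  proof (rule ccontr)
    assume "f p \<noteq> p"
    then have "p - f p \<le> 0" "0 \<le> b - f b"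
      using \<open>p \<in> S\<close> assms(4) by (auto simp: S_def)
    moreover have "continuous_on {p..b} (\<lambda>x. x - f x)"
      using p by (intro continuous_intros continuous_on_subset[OF cont]) auto
    ultimately obtain y where "p \<le> y" "y \<le> b" "f y = y"
      using IVT'[of "\<lambda>x. x - f x" p 0 b] p by auto
    then show False
      using beyond[of y] \<open>f p \<noteq> p\<close> by (cases "y = p") auto
  qed
  with p beyond show thesis
    using that by blast
qed

lemma concave_on_diagonal_split:
  fixes f :: "real \<Rightarrow> real"
  assumes conc: "concave_on {lo..hi} f" and cont: "continuous_on {lo..hi} f"
    and "lo \<le> f lo" "b \<in> {lo..hi}" "f b < b"
  obtains p where "p \<in> {lo..<b}" "f p = p"
    "\<And>x. x \<in> {lo..p} \<Longrightarrow> x \<le> f x" "\<And>x. x \<in> {p..hi} \<Longrightarrow> f x \<le> x"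
proof -
  obtain p where p: "p \<in> {lo..<b}" "f p = p"
    and beyond: "\<And>x. x \<in> {p<..b} \<Longrightarrow> f x < x"
    using greatest_fixed_point_below[of lo b f] continuous_on_subset[OF cont] assms(3-5) by auto
  define g where "g x = f x - x" for x
  have g: "concave_on {lo..hi} g"
    unfolding g_def by (intro concave_on_diff conc) (simp add: convex_on_ident)
  have "x \<le> f x" if "x \<in> {lo..p}" for x
    using concave_on_nonneg_between[OF g, of lo p x] that p assms(3,4) by (auto simp: g_def)
  moreover have "f x \<le> x" if x: "x \<in> {p..hi}" for x
  proof (cases "x \<le> b")
    case True
    then show ?thesis
      using beyond[of x] x p by (cases "x = p") auto
  next
    case False
    have "g x < 0"
      by (rule concave_on_neg_beyond[OF g, of p x b])
        (use False x p assms(4,5) in \<open>auto simp: g_def\<close>)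
    then show ?thesis
      by (simp add: g_def)
  qed
  ultimately show thesis
    using that p by blast
qed

context
  fixes f :: "real \<Rightarrow> real" and lo hi xbar L p :: real
  assumes mono: "mono_on {lo..xbar} f"
    and max: "\<And>x. x \<in> {lo..hi} \<Longrightarrow> f x \<le> f xbar"
    and lip: "lipschitz_on L {xbar..hi} f"
    and xbar: "xbar \<in> {lo..hi}"
    and fixed: "p \<in> {lo..hi}" "f p = p"
begin

private lemma lipschitz_bound:
  "x \<in> {xbar..hi} \<Longrightarrow> y \<in> {xbar..hi} \<Longrightarrow> \<bar>f x - f y\<bar> \<le> L * \<bar>x - y\<bar>"
  using lipschitz_onD[OF lip] by (simp add: dist_real_def)

lemma overshoot_left:
  assumes "x \<in> {lo..p}"
  shows "f x \<le> p + L * (p - x)"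
proof -
  have "0 \<le> L"
    using lip by (rule lipschitz_on_nonneg)
  consider "xbar \<le> x" | "x < xbar" "p \<le> xbar" | "x < xbar" "xbar < p"
    by linarith
  then show ?thesis
  proof cases
    case 1
    then show ?thesis
      using lipschitz_bound[of x p] assms fixed by auto
  next
    case 2
    then have "f x \<le> f p"
      using mono_onD[OF mono, of x p] assms by auto
    moreover have "0 \<le> L * (p - x)"
      using \<open>0 \<le> L\<close> assms by simp
    ultimately show ?thesis
      using fixed by simp
  next
    case 3
    have "f x \<le> f xbar"
      using max assms fixed by auto
    also have "\<dots> \<le> p + L * (p - xbar)"
      using lipschitz_bound[of xbar p] 3 fixed by auto
    also have "\<dots> \<le> p + L * (p - x)"
      using \<open>0 \<le> L\<close> 3 by (simp add: mult_left_mono)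
    finally show ?thesis .
  qed
qed

lemma overshoot_right:
  assumes "x \<in> {p..hi}"
  shows "p - L * (x - p) \<le> f x"
proof -
  have "0 \<le> L"
    using lip by (rule lipschitz_on_nonneg)
  consider "xbar \<le> p" | "p < xbar" "x \<le> xbar" | "p < xbar" "xbar < x"
    by linarith
  then show ?thesis
  proof cases
    case 1
    then show ?thesis
      using lipschitz_bound[of x p] assms fixed by auto
  next
    case 2
    then have "f p \<le> f x"
      using mono_onD[OF mono, of p x] assms fixed by auto
    moreover have "0 \<le> L * (x - p)"
      using \<open>0 \<le> L\<close> assms by simp
    ultimately show ?thesis
      using fixed by simp
  next
    case 3
    have "p - L * (x - p) \<le> f p - L * (x - xbar)"
      using \<open>0 \<le> L\<close> 3 fixed by (simp add: mult_left_mono)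
    also have "\<dots> \<le> f xbar - L * (x - xbar)"
      using max[OF fixed(1)] by simp
    also have "\<dots> \<le> f x"
      using lipschitz_bound[of xbar x] 3 assms by auto
    finally show ?thesis .
  qed
qed

end

lemma fixed_point_of_iterates_limit:
  fixes f :: "'a::t2_space \<Rightarrow> 'a"
  assumes "closed S" "f ` S \<subseteq> S" "continuous_on S f" "x0 \<in> S"
    and lim: "(\<lambda>k. (f ^^ k) x0) \<longlonglongrightarrow> q"
  shows "q \<in> S" "f q = q"
proof -
  have orbit: "(f ^^ k) x0 \<in> S" for k
    by (induction k) (use assms(2,4) in auto)
  show "q \<in> S"
    using closed_sequentially[OF assms(1) orbit lim] .
  have "(\<lambda>k. f ((f ^^ k) x0)) \<longlonglongrightarrow> f q"
    using continuous_on_tendsto_compose[OF assms(3) lim \<open>q \<in> S\<close>] orbit by simp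
  moreover have "(\<lambda>k. f ((f ^^ k) x0)) \<longlonglongrightarrow> q"
    using LIMSEQ_Suc[OF lim] by simp
  ultimately show "f q = q"
    by (rule LIMSEQ_unique)
qed

lemma convergent_if_dist_convergent_same_side:
  fixes s :: "nat \<Rightarrow> real"
  assumes dist: "(\<lambda>k. \<bar>s k - p\<bar>) \<longlonglongrightarrow> r"
    and same_side: "\<forall>\<^sub>F k in sequentially. 0 < (s k - p) * (s (Suc k) - p)"
  shows "convergent s"
proof -
  obtain N where N: "\<And>k. N \<le> k \<Longrightarrow> 0 < (s k - p) * (s (Suc k) - p)"
    using same_side by (auto simp: eventually_sequentially)
  have side: "sgn (s k - p) = sgn (s N - p)" if "N \<le> k" for k
    using that
  proof (induction rule: dec_induct)
    case (step k)
    have "sgn (s (Suc k) - p) = sgn (s k - p)"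
      using N[OF step(1)] by (auto simp: zero_less_mult_iff)
    with step.IH show ?case
      by simp
  qed simp
  have "\<forall>\<^sub>F k in sequentially. p + sgn (s N - p) * \<bar>s k - p\<bar> = s k"
    unfolding eventually_sequentially using side sgn_mult_abs by (metis add.commute diff_add_cancel)
  moreover have "(\<lambda>k. p + sgn (s N - p) * \<bar>s k - p\<bar>) \<longlonglongrightarrow> p + sgn (s N - p) * r"
    by (intro tendsto_intros dist)
  ultimately show ?thesis
    unfolding convergent_def using Lim_transform_eventually by blast
qed

lemma convergent_if_crossings_contract:
  fixes s :: "nat \<Rightarrow> real"
  assumes "L < 1"
    and dist_Suc_le: "\<And>k. \<bar>s (Suc k) - p\<bar> \<le> \<bar>s k - p\<bar>"
    and crossing: "\<And>k. (s k - p) * (s (Suc k) - p) \<le> 0 \<Longrightarrow>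
      \<bar>s (Suc k) - p\<bar> \<le> L * \<bar>s k - p\<bar>"
  shows "convergent s"
proof -
  define d where "d k = \<bar>s k - p\<bar>" for k
  have "decseq d" "\<forall>k. 0 \<le> d k"
    using dist_Suc_le by (auto intro: decseq_SucI simp: d_def)
  then obtain r where r: "d \<longlonglongrightarrow> r" and r_le: "\<And>k. r \<le> d k"
    using decseq_convergent by blast
  show ?thesis
  proof (cases "r = 0")
    case True
    then have "(\<lambda>k. s k - p) \<longlonglongrightarrow> 0"
      using r by (simp add: d_def[abs_def] tendsto_rabs_zero_iff)
    then show ?thesis
      unfolding convergent_def LIM_zero_iff by blast
  next
    case False
    have "0 \<le> r"
      using r by (rule LIMSEQ_le_const) (simp add: d_def)
    with False have "L * r < r"
      using \<open>L < 1\<close> mult_strict_right_mono[of L 1 r] by simp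
    then have "\<forall>\<^sub>F k in sequentially. L * d k < r"
      by (intro order_tendstoD(2)[OF tendsto_mult_left[OF r]])
    then have "\<forall>\<^sub>F k in sequentially. 0 < (s k - p) * (s (Suc k) - p)"
    proof eventually_elim
      case (elim k)
      show ?case
      proof (rule ccontr)
        assume "\<not> 0 < (s k - p) * (s (Suc k) - p)"
        then have "d (Suc k) \<le> L * d k"
          unfolding d_def by (intro crossing) simp
        with elim r_le[of "Suc k"] show False
          by simp
      qed
    qed
    with r show ?thesis
      unfolding d_def[abs_def] by (rule convergent_if_dist_convergent_same_side)
  qed
qed

lemma iterates_converge_if_overshoot_contracts:
  fixes f :: "real \<Rightarrow> real"
  assumes S: "closed S" "f ` S \<subseteq> S" "continuous_on S f" "x0 \<in> S"
    and "L < 1"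
    and left: "\<And>x. x \<in> S \<Longrightarrow> x \<le> p \<Longrightarrow> x \<le> f x \<and> f x \<le> p + L * (p - x)"
    and right: "\<And>x. x \<in> S \<Longrightarrow> p \<le> x \<Longrightarrow> p - L * (x - p) \<le> f x \<and> f x \<le> x"
  shows "\<exists>q\<in>S. f q = q \<and> (\<lambda>k. (f ^^ k) x0) \<longlonglongrightarrow> q"
proof -
  have shrink: "L * t \<le> t" if "0 \<le> t" for t
    using mult_right_mono[of L 1 t] \<open>L < 1\<close> that by simp
  have dist_le: "\<bar>f x - p\<bar> \<le> \<bar>x - p\<bar>" if "x \<in> S" for x
  proof (cases "x \<le> p")
    case True
    then show ?thesis
      using left[OF that True] shrink[of "p - x"] by auto
  next
    case False
    then have "L * (x - p) \<le> x - p"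
      by (intro shrink) simp
    then show ?thesis
      using right[OF that] False by linarith
  qed
  have crossing: "\<bar>f x - p\<bar> \<le> L * \<bar>x - p\<bar>" if "x \<in> S" "(x - p) * (f x - p) \<le> 0" for x
  proof (cases "x \<le> p")
    case True
    have "p \<le> f x"
      using that(2) left[OF that(1) True] by (cases "x = p") (auto simp: mult_le_0_iff)
    then show ?thesis
      using left[OF that(1) True] True by (simp add: abs_of_nonneg abs_of_nonpos)
  next
    case False
    have "f x \<le> p"
      using that(2) False by (auto simp: mult_le_0_iff)
    then show ?thesis
      using right[OF that(1)] False by (simp add: abs_of_nonneg abs_of_nonpos)
  qed
  have orbit: "(f ^^ k) x0 \<in> S" for k
    by (induction k) (use S(2,4) in auto)
  have "convergent (\<lambda>k. (f ^^ k) x0)"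
    using \<open>L < 1\<close> dist_le[OF orbit] crossing[OF orbit]
    by (intro convergent_if_crossings_contract) auto
  then obtain q where "(\<lambda>k. (f ^^ k) x0) \<longlonglongrightarrow> q"
    unfolding convergent_def by blast
  then show ?thesis
    using fixed_point_of_iterates_limit[OF S] by blast
qed

theorem mainTheorem8:
  fixes f :: "real \<Rightarrow> real" and a xbar L :: real
  assumes a_nonneg: "0 \<le> a"
    and maps: "\<forall>x\<in>{0..a}. f x \<in> {0..a}"
    and conc: "strictly_concave_on {0..a} f"
    and lip: "\<exists>K>0. lipschitz_on K {0..a} f"
    and nonneg: "\<forall>x\<in>{0..a}. f x \<ge> 0"
    and xbar: "xbar \<in> {0..a}" "\<forall>x\<in>{0..a}. f x \<le> f xbar"
    and lipD: "lipschitz_on L {xbar..a} f" "L < 1"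
    and b: "\<exists>b\<in>{0..a}. b > 0 \<and> f b < b"
  shows "\<forall>x0\<in>{0..a}. \<exists>p\<in>{0..a}. f p = p \<and> (\<lambda>k. (f ^^ k) x0) \<longlonglongrightarrow> p"
proof
  fix x0 assume x0: "x0 \<in> {0..a}"
  have cont: "continuous_on {0..a} f"
    using lip lipschitz_on_continuous_on by blast
  have concave: "concave_on {0..a} f"
    using conc by (intro strictly_concave_on_imp_concave_on) auto
  obtain b where b: "b \<in> {0..a}" "f b < b"
    using b by blast
  obtain p where p: "p \<in> {0..<b}" "f p = p"
    and above: "\<And>x. x \<in> {0..p} \<Longrightarrow> x \<le> f x"
    and below: "\<And>x. x \<in> {p..a} \<Longrightarrow> f x \<le> x"
    using concave_on_diagonal_split[OF concave cont _ b] nonneg a_nonneg by auto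
  have "p \<in> {0..a}"
    using p b by auto
  have "mono_on {0..xbar} f"
    using concave_on_mono_below_max[OF concave] xbar by (intro mono_onI) auto
  note overshoot = this xbar(2)[rule_format] lipD(1) xbar(1) \<open>p \<in> {0..a}\<close> p(2)
  show "\<exists>q\<in>{0..a}. f q = q \<and> (\<lambda>k. (f ^^ k) x0) \<longlonglongrightarrow> q"
    using maps x0 lipD(2)
    by (intro iterates_converge_if_overshoot_contracts[where p = p and L = L] cont)
      (auto intro: above below overshoot_left[OF overshoot] overshoot_right[OF overshoot])
qed

end
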